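(* Let $w^1,\dots,w^k$ be the functions defined below from the solution of the linear system (L). If $t_0$ is sufficiently large, there exists $C>0$ such that $\|w^i(\tau)\|_{L^2(0,\infty)}\le C$ for all $\tau\ge0$ and all $i\in\{1,\dots,k\}$.
   Context: Setting: $f$ Fisher–KPP ($f\in C^2([0,1])$, $f(0)=f(1)=0$, $f'(0)>0$, $f'(1)<0$, $0<f(s)\le f'(0)s$ on $(0,1)$), $c_*=2\sqrt{f'(0)}$, $\lambda_*=\sqrt{f'(0)}$, $k\ge2$, $\alpha>0$, $t_0>0$. System (L): for $t>0,x>0$, $V^i_t-c_*V^i_x+\frac{3/2+i-k}{\lambda_*(t+t_0)}V^i_x=V^i_{xx}+f'(0)V^i+\alpha V^{i+1}(t,x+\frac{\ln(t+t_0)}{\lambda_*})$ for $1\le i\le k-1$, $V^k_t-c_*V^k_x+\frac{3/2}{\lambda_*(t+t_0)}V^k_x=V^k_{xx}+f'(0)V^k$, $V^i(t,0)=0$, with nonnegative compactly supported nontrivial initial data on $(0,\infty)$. Set $\tau=\ln(t+t_0)-\ln t_0$, $\eta=x/\sqrt{t+t_0}$ and define $w^i$ by $V^i(t,x)=e^{-\lambda_*x}e^{\tau/2}e^{-\eta^2/8}w^i(\tau,\eta)$. With $\varepsilon=\frac{1}{\lambda_*\sqrt{t_0}}$, $\delta(\tau)=\frac{\tau+\ln t_0}{\lambda_*\sqrt{t_0e^\tau}}$, and $Mw=-w_{\eta\eta}+(\frac{\eta^2}{16}-\frac34)w$, the $w^i$ satisfy on $\eta>0$: $w^i_\tau+Mw^i+(k-i)w^i=-(\frac32+i-k)\varepsilon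 e^{-\tau/2}(w^i_\eta-\frac\eta4w^i)+\alpha\mathcal T_i[w^{i+1}]$ for $i\le k-1$, $w^k_\tau+Mw^k=-\frac32\varepsilon e^{-\tau/2}(w^k_\eta-\frac\eta4 w^k)$, $w^i(\tau,0)=0$, where $\mathcal T_i[w](\tau,\eta)=w(\tau,\eta+\delta(\tau))e^{-\delta(\tau)^2/8}e^{-\eta\delta(\tau)/4}$. *)

theory Defs
  imports "HOL-Analysis.Analysis"
begin

text \<open>Parameters: a = f'(0), lambda_* = sqrt a, c_* = 2 sqrt a.\<close>

definition L_rhs_coeff :: "nat \<Rightarrow> nat \<Rightarrow> real" where
  "L_rhs_coeff k i = (if i < k then 3/2 + real i - real k else 3/2)"

definition is_sol_L ::
  "real \<Rightarrow> nat \<Rightarrow> real \<Rightarrow> real \<Rightarrow> (nat \<Rightarrow> real \<Rightarrow> real)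
     \<Rightarrow> (nat \<Rightarrow> real \<Rightarrow> real \<Rightarrow> real) \<Rightarrow> bool" where
  "is_sol_L a k \<alpha> t0 V0 V \<longleftrightarrow>
     (\<forall>i\<in>{1..k}.
        continuous_on ({0..} \<times> {0..}) (\<lambda>(t,x). V i t x)
      \<and> (\<forall>T>0. \<exists>B. \<forall>t\<in>{0..T}. \<forall>x\<ge>0. \<bar>V i t x\<bar> \<le> B)
      \<and> (\<forall>t\<ge>0. V i t 0 = 0)
      \<and> (\<forall>x\<ge>0. V i 0 x = V0 i x)
      \<and> (\<exists>Vt Vx Vxx :: real \<Rightarrow> real \<Rightarrow> real.
            continuous_on ({0<..} \<times> {0<..}) (\<lambda>(t,x). Vt t x)
          \<and> continuous_on ({0<..} \<times> {0<..}) (\<lambda>(t,x). Vx t x)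
          \<and> continuous_on ({0<..} \<times> {0<..}) (\<lambda>(t,x). Vxx t x)
          \<and> (\<forall>t>0. \<forall>x>0.
               ((\<lambda>s. V i s x) has_real_derivative Vt t x) (at t)
             \<and> ((\<lambda>y. V i t y) has_real_derivative Vx t x) (at x)
             \<and> ((\<lambda>y. Vx t y) has_real_derivative Vxx t x) (at x)
             \<and> Vt t x - 2 * sqrt a * Vx t x
                 + L_rhs_coeff k i / (sqrt a * (t + t0)) * Vx t x
               = Vxx t x + a * V i t x
                 + (if i < k then \<alpha> * V (i+1) t (x + ln (t + t0) / sqrt a) else 0))))"

text \<open>The rescaled functions: V^i(t,x) = e^{-lambda x} e^{tau/2} e^{-eta^2/8} w^i(tau,eta),
  with tau = ln(t+t0) - ln t0, eta = x / sqrt(t+t0), i.e. t = t0 e^tau - t0,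
  x = eta sqrt(t0 e^tau).\<close>

definition w_of ::
  "real \<Rightarrow> real \<Rightarrow> (nat \<Rightarrow> real \<Rightarrow> real \<Rightarrow> real) \<Rightarrow> nat \<Rightarrow> real \<Rightarrow> real \<Rightarrow> real" where
  "w_of a t0 V i \<tau> \<eta> =
     (let t = t0 * exp \<tau> - t0; x = \<eta> * sqrt (t0 * exp \<tau>)
      in exp (sqrt a * x) * exp (- \<tau> / 2) * exp (\<eta>\<^sup>2 / 8) * V i t x)"

end

theory Submission
  imports Defs
begin

text \<open>
  The proof compares \<open>V\<close> with explicit supersolutions. With \<open>\<rho> = t + t0\<close>,
  \<open>\<lambda> = sqrt f'(0)\<close> and \<open>\<sigma> = \<rho> + 2 sqrt \<rho>\<close>, let
  \<open>S_j(t,x) = A_j g(t) (x + h_j(t)) exp (- \<lambda> x - x^2 / (4 \<sigma>))\<close>, where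
  \<open>g = exp (- 2 K / sqrt \<rho>)\<close>, \<open>h_j = \<beta> (ln \<rho>)^2\<close> for \<open>j < k\<close> and \<open>h_k = 0\<close>.
  If \<open>t0 \<ge> 16\<close> and \<open>\<alpha> A_(j+1) \<le> A_j\<close>, then \<open>S_j\<close> is a supersolution of the
  \<open>j\<close>-th equation of (L) with the source \<open>\<alpha> S_(j+1) (t, x + ln \<rho> / \<lambda>)\<close>: the growth
  of \<open>g\<close> absorbs the first-order terms of size \<open>1/\<rho>\<close>, and the shift of the source costs
  the factor \<open>exp (- ln \<rho>) = 1/\<rho>\<close>, which the growth of the lag \<open>h_j\<close> pays for.
  A weak maximum principle on the quadrant, applied by downward induction from \<open>j = k\<close>,
  gives \<open>|V^j| \<le> S_j\<close>. In the variables \<open>(\<tau>, \<eta>)\<close> the Gaussian factor beats the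
  weight \<open>exp (\<eta>^2/8)\<close> because \<open>2 \<sigma> \<le> 3 \<rho>\<close>, and \<open>(x + h_j)^2 = O(\<rho> (\<eta>^2 + 1))\<close>
  is compensated by \<open>exp (- \<tau>) = t0 / \<rho>\<close>, so \<open>(w^j)^2 \<le> C exp (- \<eta>/2)\<close>
  uniformly in \<open>\<tau>\<close>.
\<close>

lemma sq_le_8_exp_half:
  assumes "(\<eta>::real) \<ge> 0"
  shows "\<eta>\<^sup>2 \<le> 8 * exp (\<eta>/2)"
proof -
  have "1 + \<eta>/2 + (\<eta>/2)\<^sup>2/2 \<le> exp (\<eta>/2)"
    using exp_lower_Taylor_quadratic[of "\<eta>/2"] assms by simp
  moreover have "(\<eta>/2)\<^sup>2/2 = \<eta>\<^sup>2/8" by (simp add: power2_eq_square)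
  ultimately show ?thesis using assms by simp
qed

lemma quadratic_gaussian_le_exp_half:
  assumes "(\<eta>::real) \<ge> 0" "B \<ge> 0"
  shows "(2*\<eta>\<^sup>2 + B) * exp (-\<eta>\<^sup>2/12) \<le> exp 3 * (16 + B) * exp (-\<eta>/2)"
proof -
  have "(\<eta> - 6)\<^sup>2 \<ge> 0" by simp
  hence "-\<eta>\<^sup>2/12 \<le> 3 + (-\<eta>)" by (simp add: power2_eq_square algebra_simps)
  hence gauss: "exp (-\<eta>\<^sup>2/12) \<le> exp 3 * exp (-\<eta>)" by (simp add: exp_add[symmetric])
  have split: "exp (-\<eta>) = exp (-\<eta>/2) * exp (-\<eta>/2)" by (simp add: exp_add[symmetric])
  have "\<eta>\<^sup>2 * exp (-\<eta>/2) \<le> 8 * exp (\<eta>/2) * exp (-\<eta>/2)"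
    using sq_le_8_exp_half[OF assms(1)] by (intro mult_right_mono) auto
  also have "\<dots> = 8" by (simp add: mult.assoc exp_add[symmetric])
  finally have sq: "\<eta>\<^sup>2 * exp (-\<eta>/2) \<le> 8" .
  have le1: "exp (-\<eta>/2) \<le> 1" using assms by simp
  have "(2*\<eta>\<^sup>2 + B) * exp (-\<eta>\<^sup>2/12) \<le> (2*\<eta>\<^sup>2 + B) * (exp 3 * exp (-\<eta>))"
    using gauss assms by (intro mult_left_mono) auto
  also have "\<dots> = exp 3 * (2 * (\<eta>\<^sup>2 * exp (-\<eta>/2)) + B * exp (-\<eta>/2)) * exp (-\<eta>/2)"
    unfolding split by (simp add: algebra_simps)
  also have "\<dots> \<le> exp 3 * (16 + B) * exp (-\<eta>/2)"
  proof -
    have "2 * (\<eta>\<^sup>2 * exp (-\<eta>/2)) + B * exp (-\<eta>/2) \<le> 16 + B"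
      using sq mult_left_mono[OF le1, of B] assms by linarith
    thus ?thesis by (intro mult_right_mono mult_left_mono) auto
  qed
  finally show ?thesis .
qed

lemma ln_pow4_le:
  assumes "(s::real) \<ge> 1"
  shows "(ln s)^4 \<le> 256 * s"
proof -
  have "ln s \<le> (s powr (1/4)) / (1/4)" by (rule ln_powr_bound[OF assms]) simp
  hence "(ln s)^4 \<le> ((s powr (1/4)) / (1/4))^4" using assms by (intro power_mono) auto
  also have "\<dots> = 256 * (s powr (1/4))^4" by (simp add: power_divide)
  also have "(s powr (1/4))^4 = s"
    using assms by (simp add: powr_realpow[symmetric] powr_powr)
  finally show ?thesis by simp
qed

lemma exp_neg_half_integrable_Ioi: "(\<lambda>\<eta>::real. C * exp (-\<eta>/2)) integrable_on {0<..}"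
proof -
  have "(\<lambda>\<eta>::real. exp (-(1/2)*\<eta>)) integrable_on {0..}"
    by (rule integrable_on_exp_minus_to_infinity) simp
  from integrable_cmul[OF this, of C]
  have "(\<lambda>\<eta>::real. C * exp (-\<eta>/2)) integrable_on {0..}" by simp
  moreover have "negligible (({0..} - {0<..}) \<union> ({0<..} - {0..}) :: real set)"
    by (rule negligible_subset[of "{0}"]) auto
  ultimately show ?thesis using integrable_spike_set_eq by blast
qed

section \<open>A weak maximum principle on the quadrant\<close>

lemma DERIV_nonneg_at_left_max:
  fixes f :: "real \<Rightarrow> real"
  assumes deriv: "(f has_real_derivative D) (at t)" and "d > 0"
    and max: "\<And>s. t - d < s \<Longrightarrow> s < t \<Longrightarrow> f s \<le> f t"
  shows "D \<ge> 0"
proof (rule ccontr)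
  assume "\<not> D \<ge> 0"
  then obtain d' where "d' > 0" and dec: "\<And>h. h > 0 \<Longrightarrow> h < d' \<Longrightarrow> f t < f (t - h)"
    using DERIV_neg_dec_left[OF deriv] by auto
  define h where "h = min d d' / 2"
  have h: "0 < h" "h < d" "h < d'" unfolding h_def using \<open>d > 0\<close> \<open>d' > 0\<close> by auto
  show False using dec[OF h(1,3)] max[of "t - h"] h by auto
qed

lemma DERIV2_nonpos_at_right_max:
  fixes f f' :: "real \<Rightarrow> real"
  assumes deriv: "\<And>y. x \<le> y \<Longrightarrow> y < x + d \<Longrightarrow> (f has_real_derivative f' y) (at y)"
    and deriv2: "(f' has_real_derivative D2) (at x)" and crit: "f' x = 0" and "d > 0"
    and max: "\<And>y. x \<le> y \<Longrightarrow> y < x + d \<Longrightarrow> f y \<le> f x"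
  shows "D2 \<le> 0"
proof (rule ccontr)
  assume "\<not> D2 \<le> 0"
  then obtain d' where "d' > 0" and inc: "\<And>h. h > 0 \<Longrightarrow> h < d' \<Longrightarrow> 0 < f' (x + h)"
    using DERIV_pos_inc_right[OF deriv2] crit by auto
  define h where "h = min d d' / 2"
  have h: "0 < h" "h < d" "h < d'" unfolding h_def using \<open>d > 0\<close> \<open>d' > 0\<close> by auto
  obtain \<xi> where \<xi>: "x < \<xi>" "\<xi> < x + h" and mvt: "f (x + h) - f x = h * f' \<xi>"
    using MVT2[of x "x + h" f f'] h deriv by auto
  have "0 < f' \<xi>" using inc[of "\<xi> - x"] \<xi> h by simp
  hence "f x < f (x + h)" using mvt h by (simp add: algebra_simps)
  thus False using max[of "x + h"] h by simp
qed

lemma quadratic_penalty_exceeds_bound: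
  fixes \<epsilon> B x1 :: real
  assumes "\<epsilon> > 0" "x1 \<ge> 0"
  shows "\<epsilon> * (1 + (\<bar>B\<bar>/\<epsilon> + x1 + 1)\<^sup>2) > \<bar>B\<bar>"
proof -
  define R where "R = \<bar>B\<bar>/\<epsilon> + x1 + 1"
  have "1 + R\<^sup>2 - R = (R - 1/2)\<^sup>2 + 3/4" by (simp add: power2_eq_square field_simps)
  hence "1 + R\<^sup>2 \<ge> R" using zero_le_power2[of "R - 1/2"] by linarith
  hence "\<epsilon> * (1 + R\<^sup>2) \<ge> \<epsilon> * R" using assms by (intro mult_left_mono) auto
  moreover have "\<epsilon> * R = \<bar>B\<bar> + \<epsilon> * x1 + \<epsilon>" unfolding R_def using assms by (simp add: field_simps)
  ultimately show ?thesis using assms mult_nonneg_nonneg[of \<epsilon> x1] unfolding R_def by linarith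
qed

lemma penalized_max_off_boundary:
  fixes u :: "real \<Rightarrow> real \<Rightarrow> real"
  assumes bdd: "\<And>t x. t \<in> {0..t1} \<Longrightarrow> x \<ge> 0 \<Longrightarrow> u t x \<le> B"
    and init: "\<And>x. x \<ge> 0 \<Longrightarrow> u 0 x \<le> 0"
    and bdry: "\<And>t. t \<ge> 0 \<Longrightarrow> u t 0 \<le> 0"
    and \<epsilon>: "\<epsilon> > 0" and M: "M \<ge> 0" and R: "\<epsilon> * (1 + R\<^sup>2) > \<bar>B\<bar>"
    and ts: "0 \<le> ts" "ts \<le> t1" and xs: "0 \<le> xs" "xs \<le> R"
    and pos: "exp (-M*ts) * u ts xs > \<epsilon> * (1 + xs\<^sup>2)"
  shows "0 < ts" "0 < xs" "xs < R"
proof -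
  have penalty: "\<epsilon> * (1 + y\<^sup>2) > 0" for y using \<epsilon> by (simp add: add_pos_nonneg)
  have "ts \<noteq> 0" using init[OF xs(1)] pos penalty[of xs] by (auto simp: not_less)
  thus "0 < ts" using ts by simp
  have "xs \<noteq> 0"
  proof
    assume "xs = 0"
    hence "exp (-M*ts) * u ts xs \<le> 0" using bdry[OF ts(1)] by (simp add: mult_nonneg_nonpos)
    thus False using pos penalty[of xs] by linarith
  qed
  thus "0 < xs" using xs by simp
  have "exp (-M*ts) * u ts xs \<le> exp (-M*ts) * \<bar>B\<bar>"
    using bdd[of ts xs] ts xs by (intro mult_left_mono) auto
  also have "\<dots> \<le> \<bar>B\<bar>" using M ts by (intro mult_left_le_one_le) auto
  finally have "xs \<noteq> R" using pos R by auto
  thus "xs < R" using xs by simp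
qed

text \<open>The penalisation \<open>\<epsilon> (1 + x\<^sup>2)\<close> turns a positive value of \<open>u\<close> into a positive
  maximum attained at an interior point, despite the unbounded domain.\<close>

lemma exists_penalized_interior_max:
  fixes u :: "real \<Rightarrow> real \<Rightarrow> real"
  assumes cont: "continuous_on ({0..} \<times> {0..}) (\<lambda>(t,x). u t x)"
    and bdd: "\<And>t x. t \<in> {0..t1} \<Longrightarrow> x \<ge> 0 \<Longrightarrow> u t x \<le> B"
    and init: "\<And>x. x \<ge> 0 \<Longrightarrow> u 0 x \<le> 0"
    and bdry: "\<And>t. t \<ge> 0 \<Longrightarrow> u t 0 \<le> 0"
    and pos: "u t1 x1 > 0" and t1: "t1 \<ge> 0" and x1: "x1 \<ge> 0" and M: "M \<ge> 0"
  obtains \<epsilon> ts xs \<delta> where "\<epsilon> > 0" "ts > 0" "xs > 0" "\<delta> > 0"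
    "exp (-M*ts) * u ts xs > \<epsilon> * (1 + xs\<^sup>2)"
    "\<And>s y. ts - \<delta> < s \<Longrightarrow> s \<le> ts \<Longrightarrow> \<bar>y - xs\<bar> < \<delta> \<Longrightarrow>
       exp (-M * s) * u s y - \<epsilon> * (1 + y\<^sup>2) \<le> exp (-M*ts) * u ts xs - \<epsilon> * (1 + xs\<^sup>2)"
proof -
  define \<epsilon> where "\<epsilon> = exp (-M*t1) * u t1 x1 / (2 * (1 + x1\<^sup>2))"
  have \<epsilon>: "\<epsilon> > 0" unfolding \<epsilon>_def using pos by (simp add: add_pos_nonneg)
  define R where "R = \<bar>B\<bar>/\<epsilon> + x1 + 1"
  have R: "R > x1" unfolding R_def using \<epsilon> by (simp add: add_nonneg_pos)
  define z where "z p = exp (-M * fst p) * u (fst p) (snd p) - \<epsilon> * (1 + (snd p)\<^sup>2)" for p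
  define K where "K = {0..t1} \<times> {0..R}"
  have "K \<subseteq> {0..} \<times> {0..}" unfolding K_def by auto
  hence "continuous_on K (\<lambda>p. u (fst p) (snd p))"
    using continuous_on_subset[OF cont] by (simp add: case_prod_beta')
  hence "continuous_on K z" unfolding z_def by (intro continuous_intros)
  moreover have "compact K" unfolding K_def by (intro compact_Times compact_Icc)
  moreover have x1K: "(t1, x1) \<in> K" unfolding K_def using t1 x1 R by auto
  ultimately obtain p where "p \<in> K" and pmax: "\<And>q. q \<in> K \<Longrightarrow> z q \<le> z p"
    using continuous_attains_sup[of K z] by blast
  then obtain ts xs where p: "p = (ts, xs)" and ts: "0 \<le> ts" "ts \<le> t1" and xs: "0 \<le> xs" "xs \<le> R"
    unfolding K_def by (cases p) auto
  have "1 + x1\<^sup>2 > 0" by (simp add: add_pos_nonneg)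
  hence "z (t1, x1) = \<epsilon> * (1 + x1\<^sup>2)" unfolding z_def \<epsilon>_def by (simp add: field_simps)
  hence "z (ts, xs) \<ge> \<epsilon> * (1 + x1\<^sup>2)" using pmax[OF x1K] p by simp
  moreover have "\<epsilon> * (1 + x1\<^sup>2) > 0" using \<epsilon> by (simp add: add_pos_nonneg)
  ultimately have zpos: "z (ts, xs) > 0" by linarith
  hence pos_max: "exp (-M*ts) * u ts xs > \<epsilon> * (1 + xs\<^sup>2)" unfolding z_def by simp
  have "\<epsilon> * (1 + R\<^sup>2) > \<bar>B\<bar>" unfolding R_def by (rule quadratic_penalty_exceeds_bound[OF \<epsilon> x1])
  from penalized_max_off_boundary[OF bdd init bdry \<epsilon> M this ts xs pos_max]
  have ts_pos: "ts > 0" and xs_pos: "xs > 0" and xs_R: "xs < R" by auto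
  define \<delta> where "\<delta> = min ts (min xs (R - xs))"
  have \<delta>: "\<delta> > 0" unfolding \<delta>_def using ts_pos xs_pos xs_R by simp
  have \<delta>_le: "\<delta> \<le> ts" "\<delta> \<le> xs" "\<delta> \<le> R - xs" unfolding \<delta>_def by auto
  show thesis
  proof (rule that[OF \<epsilon> ts_pos xs_pos \<delta> pos_max])
    show "exp (-M * s) * u s y - \<epsilon> * (1 + y\<^sup>2) \<le> exp (-M*ts) * u ts xs - \<epsilon> * (1 + xs\<^sup>2)"
      if "ts - \<delta> < s" "s \<le> ts" "\<bar>y - xs\<bar> < \<delta>" for s y
    proof -
      have "(s, y) \<in> K" unfolding K_def using that ts \<delta>_le by auto
      thus ?thesis using pmax p unfolding z_def by fastforce
    qed
  qed
qed

lemma penalty_growth_exceeds_drift: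
  fixes \<epsilon> D N U x :: real
  assumes \<epsilon>: "\<epsilon> > 0" and D: "D \<ge> 0" and N: "N \<ge> 2 + D" and U: "U > \<epsilon> * (1 + x\<^sup>2)"
  shows "N * U > 2*\<epsilon> + D * (2*\<epsilon>*x)"
proof -
  have "N * U > N * (\<epsilon> * (1 + x\<^sup>2))" using U N D by (intro mult_strict_left_mono) auto
  moreover have "N * (\<epsilon> * (1 + x\<^sup>2)) \<ge> (2 + D) * (\<epsilon> * (1 + x\<^sup>2))"
    using N \<epsilon> by (intro mult_right_mono) (auto intro: add_nonneg_nonneg)
  moreover have "(2 + D) * (\<epsilon> * (1 + x\<^sup>2)) - (2*\<epsilon> + D * (2*\<epsilon>*x)) = \<epsilon> * (2*x\<^sup>2 + D * (1 - x)\<^sup>2)"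
    by (simp add: algebra_simps power2_eq_square)
  moreover have "\<epsilon> * (2*x\<^sup>2 + D * (1 - x)\<^sup>2) \<ge> 0" using \<epsilon> D by simp
  ultimately show ?thesis by linarith
qed

lemma weak_max_principle_quadrant:
  fixes u ut ux uxx b :: "real \<Rightarrow> real \<Rightarrow> real" and c Bb t1 x1 :: real
  assumes cont: "continuous_on ({0..} \<times> {0..}) (\<lambda>(t,x). u t x)"
    and bdd: "\<And>T. T > 0 \<Longrightarrow> \<exists>B. \<forall>t\<in>{0..T}. \<forall>x\<ge>0. u t x \<le> B"
    and init: "\<And>x. x \<ge> 0 \<Longrightarrow> u 0 x \<le> 0"
    and bdry: "\<And>t. t \<ge> 0 \<Longrightarrow> u t 0 \<le> 0"
    and dt: "\<And>t x. t > 0 \<Longrightarrow> x > 0 \<Longrightarrow> ((\<lambda>s. u s x) has_real_derivative ut t x) (at t)"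
    and dx: "\<And>t x. t > 0 \<Longrightarrow> x > 0 \<Longrightarrow> ((\<lambda>y. u t y) has_real_derivative ux t x) (at x)"
    and dxx: "\<And>t x. t > 0 \<Longrightarrow> x > 0 \<Longrightarrow> ((\<lambda>y. ux t y) has_real_derivative uxx t x) (at x)"
    and ineq: "\<And>t x. t > 0 \<Longrightarrow> x > 0 \<Longrightarrow> ut t x \<le> uxx t x + b t x * ux t x + c * u t x"
    and b_bdd: "\<And>t x. t \<ge> 0 \<Longrightarrow> \<bar>b t x\<bar> \<le> Bb"
    and t1: "t1 \<ge> 0" and x1: "x1 \<ge> 0"
  shows "u t1 x1 \<le> 0"
proof (rule ccontr)
  assume "\<not> u t1 x1 \<le> 0"
  hence pos: "u t1 x1 > 0" by simp
  have "t1 \<noteq> 0" using init[OF x1] pos by auto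
  then obtain B where B: "\<And>t x. t \<in> {0..t1} \<Longrightarrow> x \<ge> 0 \<Longrightarrow> u t x \<le> B"
    using bdd[of t1] t1 by force
  define Bb' where "Bb' = max Bb 0"
  define M where "M = \<bar>c\<bar> + 2 + Bb'"
  have Bb': "Bb' \<ge> 0" and M: "M \<ge> 0" "M - c \<ge> 2 + Bb'" unfolding M_def Bb'_def by auto
  obtain \<epsilon> ts xs \<delta> where \<epsilon>: "\<epsilon> > 0" and ts: "ts > 0" and xs: "xs > 0" and \<delta>: "\<delta> > 0"
    and zpos: "exp (-M*ts) * u ts xs > \<epsilon> * (1 + xs\<^sup>2)"
    and zmax: "\<And>s y. ts - \<delta> < s \<Longrightarrow> s \<le> ts \<Longrightarrow> \<bar>y - xs\<bar> < \<delta> \<Longrightarrow>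
       exp (-M * s) * u s y - \<epsilon> * (1 + y\<^sup>2) \<le> exp (-M*ts) * u ts xs - \<epsilon> * (1 + xs\<^sup>2)"
    using exists_penalized_interior_max[OF cont B init bdry pos t1 x1 M(1)] by blast
  define E where "E = exp (-M*ts)"
  define zx where "zx y = E * ux ts y - \<epsilon> * (2*y)" for y
  have dzx: "((\<lambda>y. E * u ts y - \<epsilon> * (1 + y\<^sup>2)) has_real_derivative zx y) (at y)" if "y > 0" for y
    unfolding zx_def using dx[OF ts that] by (auto intro!: derivative_eq_intros)
  have crit: "zx xs = 0"
    by (rule DERIV_local_max[OF dzx[OF xs] \<delta>]) (use zmax in \<open>auto simp: E_def abs_minus_commute\<close>)
  have concave: "E * uxx ts xs - \<epsilon> * 2 \<le> 0"
  proof (rule DERIV2_nonpos_at_right_max[where f' = zx and d = \<delta>])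
    show "((\<lambda>y. E * u ts y - \<epsilon> * (1 + y\<^sup>2)) has_real_derivative zx y) (at y)"
      if "xs \<le> y" "y < xs + \<delta>" for y using dzx that xs by simp
    show "(zx has_real_derivative E * uxx ts xs - \<epsilon> * 2) (at xs)"
      unfolding zx_def[abs_def] using dxx[OF ts xs] by (auto intro!: derivative_eq_intros)
  qed (use zmax crit \<delta> in \<open>auto simp: E_def\<close>)
  have rising: "E * ut ts xs - M * E * u ts xs \<ge> 0"
  proof (rule DERIV_nonneg_at_left_max[OF _ \<delta>])
    show "((\<lambda>s. exp (-M * s) * u s xs - \<epsilon> * (1 + xs\<^sup>2)) has_real_derivative E * ut ts xs - M * E * u ts xs) (at ts)"
      unfolding E_def using dt[OF ts xs] by (auto intro!: derivative_eq_intros simp: algebra_simps)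
  qed (use zmax in auto)
  define U where "U = E * u ts xs"
  have U: "U > \<epsilon> * (1 + xs\<^sup>2)" using zpos unfolding U_def E_def .
  have "E * ut ts xs \<le> E * uxx ts xs + b ts xs * (E * ux ts xs) + c * U"
    using mult_left_mono[OF ineq[OF ts xs], of E] unfolding U_def E_def by (simp add: algebra_simps)
  moreover have "E * ux ts xs = \<epsilon> * (2*xs)" using crit unfolding zx_def by simp
  moreover have "M * U \<le> E * ut ts xs" using rising unfolding U_def by (simp add: algebra_simps)
  ultimately have "M * U \<le> \<epsilon> * 2 + b ts xs * (\<epsilon> * (2*xs)) + c * U"
    using concave by simp
  hence "(M - c) * U \<le> 2*\<epsilon> + b ts xs * (2*\<epsilon>*xs)" by (simp add: algebra_simps)
  also have "\<dots> \<le> 2*\<epsilon> + Bb' * (2*\<epsilon>*xs)"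
    using b_bdd[of ts xs] ts \<epsilon> xs unfolding Bb'_def by (intro add_left_mono mult_right_mono) auto
  finally show False using penalty_growth_exceeds_drift[OF \<epsilon> Bb' M(2) U] by linarith
qed


section \<open>The supersolution profile\<close>

lemma profile_has_derivative_t:
  fixes g h \<sigma> :: "real \<Rightarrow> real"
  assumes "(g has_real_derivative g') (at t)" "(h has_real_derivative h') (at t)"
    "(\<sigma> has_real_derivative \<sigma>') (at t)" "\<sigma> t \<noteq> 0"
  shows "((\<lambda>t. A * g t * (x + h t) * exp (-l*x) * exp (-x\<^sup>2/(4*\<sigma> t))) has_real_derivative
     A * exp (-l*x) * exp (-x\<^sup>2/(4*\<sigma> t)) * (g' * (x + h t) + g t * h' + g t * (x + h t) * \<sigma>' * x\<^sup>2/(4*(\<sigma> t)\<^sup>2))) (at t)"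
  using assms by (auto intro!: derivative_eq_intros simp: field_simps power2_eq_square)

lemma profile_has_derivative_x:
  assumes "\<sigma> \<noteq> 0"
  shows "((\<lambda>x. A * G * (x + h) * exp (-l*x) * exp (-x\<^sup>2/(4*\<sigma>))) has_real_derivative
     A * G * exp (-l*x) * exp (-x\<^sup>2/(4*\<sigma>)) * (1 + (x + h) * (-l - x/(2*\<sigma>)))) (at x)"
  using assms by (auto intro!: derivative_eq_intros simp: field_simps power2_eq_square)

lemma profile_x_has_derivative_x:
  assumes "\<sigma> \<noteq> 0"
  shows "((\<lambda>x. A * G * exp (-l*x) * exp (-x\<^sup>2/(4*\<sigma>)) * (1 + (x + h) * (-l - x/(2*\<sigma>)))) has_real_derivative
     A * G * exp (-l*x) * exp (-x\<^sup>2/(4*\<sigma>)) * (2 * (-l - x/(2*\<sigma>)) + (x + h) * ((l + x/(2*\<sigma>))\<^sup>2 - 1/(2*\<sigma>)))) (at x)"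
  using assms by (auto intro!: derivative_eq_intros simp: field_simps power2_eq_square)

lemma profile_defect_eq:
  fixes A G G' h h' \<sigma> \<sigma>' x l c \<rho> X Eg :: real
  assumes "l \<noteq> 0" "\<rho> \<noteq> 0" "\<sigma> \<noteq> 0"
  shows "A*X*Eg*(G'*(x + h) + G*h' + G*(x+h)*\<sigma>'*x\<^sup>2/(4*\<sigma>\<^sup>2))
     - A*G*X*Eg*(2*(-l - x/(2*\<sigma>)) + (x+h)*((l + x/(2*\<sigma>))\<^sup>2 - 1/(2*\<sigma>)))
     - (2*l - c/(l * \<rho>)) * (A*G*X*Eg*(1 + (x+h)*(-l - x/(2*\<sigma>))))
     - l\<^sup>2 * (A*G*(x+h)*X*Eg)
   = A*X*Eg*(G'*(x+h) + G*(h' + (c/l)/\<rho> - h/\<sigma>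
       + (x+h)*((\<sigma>'-1)*x\<^sup>2/(4*\<sigma>\<^sup>2) - (c/l)*x/(2*\<rho>*\<sigma>) + 3/(2*\<sigma>) - c/\<rho>)))"
  using assms by (simp add: field_simps power2_eq_square)

text \<open>Completing the square in \<open>x\<close>: the Gaussian terms are bounded below once the growth
  rate \<open>K\<close> of the amplitude dominates \<open>\<gamma>\<^sup>2/4\<close>.\<close>

lemma width_terms_lower_bound:
  fixes r x \<gamma> c K \<sigma> :: real
  assumes r: "r > 0" and K: "K \<ge> \<gamma>\<^sup>2/4 + 3" and \<sigma>: "\<sigma> = r\<^sup>2 + 2*r"
  shows "K/(r\<^sup>2*r) + (1/r)*x\<^sup>2/(4*\<sigma>\<^sup>2) - \<gamma>*x/(2*r\<^sup>2*\<sigma>) + 3/(2*\<sigma>) - c/r\<^sup>2 \<ge> (3/2 - c)/r\<^sup>2"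
proof -
  have \<sigma>0: "\<sigma> > 0" using r \<sigma> by (simp add: add_pos_pos)
  have square: "(1/r)*x\<^sup>2/(4*\<sigma>\<^sup>2) - \<gamma>*x/(2*r\<^sup>2*\<sigma>) + \<gamma>\<^sup>2/(4*r\<^sup>2*r) = (x/\<sigma> - \<gamma>/r)\<^sup>2/(4*r)"
    using r \<sigma>0 by (simp add: field_simps power2_eq_square)
  have "3/(2*r\<^sup>2) - 3/(2*\<sigma>) = 3*(\<sigma> - r\<^sup>2)/(2*r\<^sup>2*\<sigma>)"
    using r \<sigma>0 by (simp add: field_simps)
  also have "\<dots> = 3*(2*r)/(2*r\<^sup>2*\<sigma>)" using \<sigma> by simp
  also have "\<dots> = 3/(r*\<sigma>)" using r \<sigma>0 by (simp add: field_simps power2_eq_square)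
  also have "\<dots> \<le> 3/(r\<^sup>2*r)"
  proof (rule divide_left_mono)
    show "r\<^sup>2*r \<le> r*\<sigma>" using \<sigma> mult_pos_pos[OF r r] by (simp add: power2_eq_square algebra_simps)
    show "0 < r*\<sigma>*(r\<^sup>2*r)" using r \<sigma>0 by simp
  qed simp
  finally have width: "3/(2*r\<^sup>2) - 3/(2*\<sigma>) \<le> 3/(r\<^sup>2*r)" .
  have "(x/\<sigma> - \<gamma>/r)\<^sup>2/(4*r) \<ge> 0" using r by simp
  moreover have "K/(r\<^sup>2*r) \<ge> \<gamma>\<^sup>2/(4*r\<^sup>2*r) + 3/(r\<^sup>2*r)"
    using divide_right_mono[OF K, of "r\<^sup>2*r"] r by (simp add: add_divide_distrib)
  moreover have "(3/2 - c)/r\<^sup>2 = 3/(2*r\<^sup>2) - c/r\<^sup>2" using r by (simp add: field_simps)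
  ultimately show ?thesis using square width by linarith
qed

lemma defect_factor_lower_bound:
  fixes r x c K \<sigma> \<rho> p h h' l :: real
  assumes r: "r > 0" and \<rho>: "\<rho> = r\<^sup>2" and \<sigma>: "\<sigma> = r\<^sup>2 + 2*r"
    and p: "p \<ge> 0" and h: "h \<ge> 0" and K: "K \<ge> (c/l)\<^sup>2/4 + 3"
  shows "\<rho> * (K*p/(\<rho>*r) + (h' + (c/l)/\<rho> - h/\<sigma>
            + p*(((1 + 1/r) - 1)*x\<^sup>2/(4*\<sigma>\<^sup>2) - (c/l)*x/(2*\<rho>*\<sigma>) + 3/(2*\<sigma>) - c/\<rho>)))
     \<ge> h'*\<rho> + c/l - h + p*(3/2 - c)"
proof -
  have \<sigma>0: "\<sigma> > 0" and \<rho>0: "\<rho> > 0" using r \<sigma> \<rho> by (simp_all add: add_pos_pos)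
  define Br where "Br = K/(r\<^sup>2*r) + (1/r)*x\<^sup>2/(4*\<sigma>\<^sup>2) - (c/l)*x/(2*r\<^sup>2*\<sigma>) + 3/(2*\<sigma>) - c/r\<^sup>2"
  have "K*p/(\<rho>*r) + (h' + (c/l)/\<rho> - h/\<sigma>
          + p*(((1 + 1/r) - 1)*x\<^sup>2/(4*\<sigma>\<^sup>2) - (c/l)*x/(2*\<rho>*\<sigma>) + 3/(2*\<sigma>) - c/\<rho>))
      = h' + (c/l)/\<rho> - h/\<sigma> + p * Br"
    unfolding Br_def \<rho> by (simp add: algebra_simps)
  moreover have "p * Br \<ge> p * ((3/2 - c)/r\<^sup>2)"
    using width_terms_lower_bound[OF r K \<sigma>] p unfolding Br_def by (intro mult_left_mono) auto
  moreover have "h/\<sigma> \<le> h/\<rho>"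
    using h mult_pos_pos[OF \<sigma>0 \<rho>0] \<sigma> \<rho> r by (intro divide_left_mono) auto
  ultimately have "\<rho> * (h' + (c/l)/\<rho> - h/\<rho> + p * ((3/2 - c)/r\<^sup>2))
      \<le> \<rho> * (K*p/(\<rho>*r) + (h' + (c/l)/\<rho> - h/\<sigma>
          + p*(((1 + 1/r) - 1)*x\<^sup>2/(4*\<sigma>\<^sup>2) - (c/l)*x/(2*\<rho>*\<sigma>) + 3/(2*\<sigma>) - c/\<rho>)))"
    using \<rho>0 by (intro mult_left_mono) auto
  moreover have "\<rho> * (h' + (c/l)/\<rho> - h/\<rho> + p * ((3/2 - c)/r\<^sup>2)) = h'*\<rho> + c/l - h + p*(3/2 - c)"
    using \<rho>0 unfolding \<rho>[symmetric] by (simp add: field_simps)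
  ultimately show ?thesis by simp
qed

lemma L_rhs_coeff_bounds:
  assumes "1 \<le> j" "j \<le> k" "k \<ge> 2"
  shows "\<bar>L_rhs_coeff k j\<bar> \<le> k" "j < k \<Longrightarrow> L_rhs_coeff k j \<le> 1/2"
    "j + 1 < k \<Longrightarrow> L_rhs_coeff k j \<le> -1/2"
  using assms by (auto simp: L_rhs_coeff_def)


section \<open>Comparison with the supersolution\<close>

locale L_system =
  fixes a t0 \<alpha> :: real and k :: nat
  assumes a_pos: "a > 0" and t0_ge: "t0 \<ge> 16" and \<alpha>_pos: "\<alpha> > 0" and k_ge: "k \<ge> 2"
begin

text \<open>In the notation above: \<open>width = \<sigma>\<close>, \<open>Kamp = K\<close>, \<open>amp = g\<close>,
  \<open>lag j = h_j\<close> and \<open>supsol A j = S_j\<close> with amplitude \<open>A\<close>.\<close>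

definition lam :: real where "lam = sqrt a"
definition \<rho> :: "real \<Rightarrow> real" where "\<rho> t = t + t0"
definition width :: "real \<Rightarrow> real" where "width t = \<rho> t + 2 * sqrt (\<rho> t)"
definition Kamp :: real where "Kamp = (real k)\<^sup>2 / (4*a) + 3"
definition amp :: "real \<Rightarrow> real" where "amp t = exp (- 2 * Kamp / sqrt (\<rho> t))"
definition \<beta> :: real where "\<beta> = (real k + 1) / (2 * lam)"
definition lag :: "nat \<Rightarrow> real \<Rightarrow> real" where
  "lag j t = (if j < k then \<beta> * (ln (\<rho> t))\<^sup>2 else 0)"
definition lag' :: "nat \<Rightarrow> real \<Rightarrow> real" where
  "lag' j t = (if j < k then \<beta> * (2 * ln (\<rho> t)) / \<rho> t else 0)"
definition drift :: "nat \<Rightarrow> real \<Rightarrow> real" where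
  "drift j t = 2 * lam - L_rhs_coeff k j / (lam * \<rho> t)"

definition supsol :: "real \<Rightarrow> nat \<Rightarrow> real \<Rightarrow> real \<Rightarrow> real" where
  "supsol A j t x = A * amp t * (x + lag j t) * exp (- lam * x) * exp (- x\<^sup>2 / (4 * width t))"
definition supsol_t :: "real \<Rightarrow> nat \<Rightarrow> real \<Rightarrow> real \<Rightarrow> real" where
  "supsol_t A j t x = A * exp (-lam*x) * exp (-x\<^sup>2/(4*width t)) *
     (amp t * (Kamp / (\<rho> t * sqrt (\<rho> t))) * (x + lag j t) + amp t * lag' j t
      + amp t * (x + lag j t) * (1 + 1 / sqrt (\<rho> t)) * x\<^sup>2/(4*(width t)\<^sup>2))"
definition supsol_x :: "real \<Rightarrow> nat \<Rightarrow> real \<Rightarrow> real \<Rightarrow> real" where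
  "supsol_x A j t x = A * amp t * exp (-lam*x) * exp (-x\<^sup>2/(4*width t)) *
     (1 + (x + lag j t) * (-lam - x/(2*width t)))"
definition supsol_xx :: "real \<Rightarrow> nat \<Rightarrow> real \<Rightarrow> real \<Rightarrow> real" where
  "supsol_xx A j t x = A * amp t * exp (-lam*x) * exp (-x\<^sup>2/(4*width t)) *
     (2 * (-lam - x/(2*width t)) + (x + lag j t) * ((lam + x/(2*width t))\<^sup>2 - 1/(2*width t)))"

definition defect :: "real \<Rightarrow> nat \<Rightarrow> real \<Rightarrow> real \<Rightarrow> real" where
  "defect A j t x = supsol_t A j t x - supsol_xx A j t x - drift j t * supsol_x A j t x - a * supsol A j t x"
definition margin :: "nat \<Rightarrow> real \<Rightarrow> real \<Rightarrow> real" where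
  "margin j t x = lag' j t * \<rho> t + L_rhs_coeff k j / lam - lag j t + (x + lag j t) * (3/2 - L_rhs_coeff k j)"

lemma lam_pos: "lam > 0" unfolding lam_def using a_pos by simp

lemma lam_sq: "lam\<^sup>2 = a" unfolding lam_def using a_pos by simp

lemma rho_ge_16: "t \<ge> 0 \<Longrightarrow> \<rho> t \<ge> 16" unfolding \<rho>_def using t0_ge by simp

lemma ln_rho_ge_1:
  assumes "t \<ge> 0"
  shows "ln (\<rho> t) \<ge> 1"
proof -
  have "exp 1 \<le> \<rho> t" using exp_le rho_ge_16[OF assms] by linarith
  thus ?thesis using rho_ge_16[OF assms] by (simp add: ln_ge_iff)
qed

lemma sqrt_rho_ge_4: "t \<ge> 0 \<Longrightarrow> sqrt (\<rho> t) \<ge> 4"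
  using rho_ge_16[of t] real_sqrt_le_mono[of 16 "\<rho> t"] by simp

lemma width_pos: "t \<ge> 0 \<Longrightarrow> width t > 0"
  unfolding width_def using rho_ge_16[of t] sqrt_rho_ge_4[of t] by simp

lemma amp_pos: "amp t > 0" unfolding amp_def by simp

lemma amp_le_1:
  assumes "t \<ge> 0"
  shows "amp t \<le> 1"
proof -
  have "Kamp \<ge> 0" unfolding Kamp_def using a_pos by simp
  hence "2 * Kamp / sqrt (\<rho> t) \<ge> 0" using rho_ge_16[OF assms] by (intro divide_nonneg_nonneg) auto
  thus ?thesis unfolding amp_def by simp
qed

lemma lag_nonneg: "lag j t \<ge> 0"
  unfolding lag_def \<beta>_def using lam_pos by simp

lemma lag_sq_le:
  assumes "t \<ge> 0"
  shows "(lag j t)\<^sup>2 \<le> 256 * \<beta>\<^sup>2 * \<rho> t"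
proof (cases "j < k")
  case True
  have "(lag j t)\<^sup>2 = \<beta>\<^sup>2 * (ln (\<rho> t))^4"
    unfolding lag_def using True by (simp add: power_mult_distrib power_mult[symmetric])
  also have "\<dots> \<le> \<beta>\<^sup>2 * (256 * \<rho> t)"
    using ln_pow4_le[of "\<rho> t"] rho_ge_16[OF assms] by (intro mult_left_mono) auto
  finally show ?thesis by simp
qed (use rho_ge_16[OF assms] in \<open>simp add: lag_def\<close>)

lemma Kamp_ge:
  assumes "j \<in> {1..k}"
  shows "Kamp \<ge> (L_rhs_coeff k j / lam)\<^sup>2/4 + 3"
proof -
  have "(L_rhs_coeff k j)\<^sup>2 \<le> (real k)\<^sup>2"
    using L_rhs_coeff_bounds(1)[of j k] assms k_ge by (metis abs_le_square_iff abs_of_nat atLeastAtMost_iff)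
  hence "(L_rhs_coeff k j)\<^sup>2 / a \<le> (real k)\<^sup>2 / a" using a_pos by (simp add: divide_right_mono)
  moreover have "(L_rhs_coeff k j / lam)\<^sup>2 = (L_rhs_coeff k j)\<^sup>2 / a"
    using lam_sq by (simp add: power_divide)
  ultimately show ?thesis unfolding Kamp_def by simp
qed

lemma drift_bounded:
  assumes "t \<ge> 0" "j \<in> {1..k}"
  shows "\<bar>drift j t\<bar> \<le> 2 * lam + real k / (lam * t0)"
proof -
  have lr: "lam * \<rho> t \<ge> lam * t0" and lt0: "lam * t0 > 0"
    using assms lam_pos t0_ge unfolding \<rho>_def by auto
  have "\<bar>L_rhs_coeff k j / (lam * \<rho> t)\<bar> = \<bar>L_rhs_coeff k j\<bar> / (lam * \<rho> t)" using lr lt0 by simp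
  also have "\<dots> \<le> real k / (lam * \<rho> t)"
    using L_rhs_coeff_bounds(1)[of j k] assms k_ge lr lt0 by (intro divide_right_mono) auto
  also have "\<dots> \<le> real k / (lam * t0)" using lr lt0 by (intro divide_left_mono) auto
  finally show ?thesis unfolding drift_def using lam_pos by linarith
qed

lemma amp_has_derivative:
  assumes "t \<ge> 0"
  shows "(amp has_real_derivative amp t * (Kamp / (\<rho> t * sqrt (\<rho> t)))) (at t)"
  unfolding amp_def[abs_def] \<rho>_def using rho_ge_16[OF assms] unfolding \<rho>_def
  by (auto intro!: derivative_eq_intros simp: divide_simps)

lemma width_has_derivative:
  assumes "t \<ge> 0"
  shows "(width has_real_derivative 1 + 1 / sqrt (\<rho> t)) (at t)"
  unfolding width_def[abs_def] \<rho>_def using rho_ge_16[OF assms] unfolding \<rho>_def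
  by (auto intro!: derivative_eq_intros simp: divide_simps)

lemma lag_has_derivative:
  assumes "t \<ge> 0"
  shows "(lag j has_real_derivative lag' j t) (at t)"
  unfolding lag_def[abs_def] lag'_def \<rho>_def using rho_ge_16[OF assms] unfolding \<rho>_def
  by (auto intro!: derivative_eq_intros simp: divide_simps)

lemma supsol_has_derivative_t:
  "t \<ge> 0 \<Longrightarrow> ((\<lambda>s. supsol A j s x) has_real_derivative supsol_t A j t x) (at t)"
  unfolding supsol_def supsol_t_def
  by (rule profile_has_derivative_t[OF amp_has_derivative lag_has_derivative width_has_derivative])
    (auto dest: width_pos)

lemma supsol_has_derivative_x:
  "t \<ge> 0 \<Longrightarrow> ((\<lambda>y. supsol A j t y) has_real_derivative supsol_x A j t x) (at x)"
  unfolding supsol_def supsol_x_def by (rule profile_has_derivative_x) (auto dest: width_pos)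

lemma supsol_x_has_derivative_x:
  "t \<ge> 0 \<Longrightarrow> ((\<lambda>y. supsol_x A j t y) has_real_derivative supsol_xx A j t x) (at x)"
  unfolding supsol_x_def supsol_xx_def by (rule profile_x_has_derivative_x) (auto dest: width_pos)

lemma supsol_nonneg: "t \<ge> 0 \<Longrightarrow> x \<ge> 0 \<Longrightarrow> A \<ge> 0 \<Longrightarrow> supsol A j t x \<ge> 0"
  unfolding supsol_def using amp_pos[of t] lag_nonneg[of j t] by simp

lemma supsol_mono:
  assumes "t \<ge> 0" "x \<ge> 0" "A \<le> B"
  shows "supsol A j t x \<le> supsol B j t x"
proof -
  have "amp t * (x + lag j t) * exp (- lam * x) * exp (- x\<^sup>2 / (4 * width t)) \<ge> 0"
    using assms amp_pos[of t] lag_nonneg[of j t] by simp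
  thus ?thesis unfolding supsol_def using mult_right_mono[OF assms(3)] by (simp add: mult.assoc)
qed

lemma supsol_continuous: "continuous_on ({0..} \<times> {0..}) (\<lambda>(t,x). supsol A j t x)"
proof -
  let ?Q = "{0..} \<times> {0..} :: (real \<times> real) set"
  have \<rho>: "\<And>t. t \<ge> 0 \<Longrightarrow> \<rho> t > 0" "\<And>t. t \<ge> 0 \<Longrightarrow> \<rho> t \<noteq> 0"
    using rho_ge_16 by fastforce+
  have c\<rho>: "continuous_on ?Q (\<lambda>p. \<rho> (fst p))" unfolding \<rho>_def by (intro continuous_intros)
  have "continuous_on ?Q (\<lambda>p. amp (fst p))"
    unfolding amp_def using \<rho> by (intro continuous_intros c\<rho>) auto
  moreover have "continuous_on ?Q (\<lambda>p. lag j (fst p))"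
    unfolding lag_def using \<rho> by (cases "j < k") (auto intro!: continuous_intros c\<rho>)
  moreover have "continuous_on ?Q (\<lambda>p. width (fst p))"
    unfolding width_def by (intro continuous_intros c\<rho>)
  moreover have "\<And>p. p \<in> ?Q \<Longrightarrow> width (fst p) \<noteq> 0" using width_pos by fastforce
  ultimately have "continuous_on ?Q (\<lambda>p. supsol A j (fst p) (snd p))"
    unfolding supsol_def by (intro continuous_intros) auto
  thus ?thesis by (simp add: case_prod_beta')
qed

lemma defect_ge_margin:
  assumes t: "t \<ge> 0" and x: "x \<ge> 0" and j: "j \<in> {1..k}" and A: "A \<ge> 0"
  shows "defect A j t x \<ge> A * amp t * exp (-lam*x) * exp (-x\<^sup>2/(4*width t)) * (margin j t x / \<rho> t)"
proof -
  define c where "c = L_rhs_coeff k j"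
  define r where "r = sqrt (\<rho> t)"
  define G where "G = amp t"
  define X where "X = exp (-lam*x)"
  define Eg where "Eg = exp (-x\<^sup>2/(4*width t))"
  define h where "h = lag j t"
  define h' where "h' = lag' j t"
  define \<sigma> where "\<sigma> = width t"
  define R where "R = \<rho> t"
  define p where "p = x + h"
  have r: "r > 0" and R: "R = r\<^sup>2" "R > 0"
    unfolding r_def R_def using rho_ge_16[OF t] by simp_all
  have \<sigma>: "\<sigma> = r\<^sup>2 + 2*r" "\<sigma> > 0"
    using R width_pos[OF t] unfolding \<sigma>_def width_def R_def r_def by simp_all
  have h: "h \<ge> 0" unfolding h_def using lag_nonneg .
  have prefactor: "A*X*Eg*G \<ge> 0"
    unfolding X_def Eg_def G_def using A amp_pos[of t] by (intro mult_nonneg_nonneg) auto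
  define Q where "Q = Kamp*p/(R*r) + (h' + (c/lam)/R - h/\<sigma>
    + p*(((1 + 1/r) - 1)*x\<^sup>2/(4*\<sigma>\<^sup>2) - (c/lam)*x/(2*R*\<sigma>) + 3/(2*\<sigma>) - c/R))"
  have "defect A j t x = A*X*Eg*(G * (Kamp / (R * r))*(x + h) + G*h' + G*(x+h)*(1 + 1/r)*x\<^sup>2/(4*\<sigma>\<^sup>2))
     - A*G*X*Eg*(2*(-lam - x/(2*\<sigma>)) + (x+h)*((lam + x/(2*\<sigma>))\<^sup>2 - 1/(2*\<sigma>)))
     - (2*lam - c/(lam * R)) * (A*G*X*Eg*(1 + (x+h)*(-lam - x/(2*\<sigma>))))
     - lam\<^sup>2 * (A*G*(x+h)*X*Eg)"
    unfolding defect_def supsol_t_def supsol_x_def supsol_xx_def supsol_def drift_def lam_sq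
      c_def r_def G_def X_def Eg_def h_def h'_def \<sigma>_def R_def
    by (simp add: algebra_simps)
  also have "\<dots> = A*X*Eg*G*Q"
    unfolding profile_defect_eq[OF lam_pos[THEN less_imp_neq, symmetric] R(2)[THEN less_imp_neq, symmetric]
        \<sigma>(2)[THEN less_imp_neq, symmetric]] Q_def p_def
    by (simp add: algebra_simps)
  finally have defect_eq: "defect A j t x = A*X*Eg*G*Q" .
  have "R * Q \<ge> h'*R + c/lam - h + p*(3/2 - c)"
    unfolding Q_def using defect_factor_lower_bound[OF r R(1) \<sigma>(1) _ h] Kamp_ge[OF j] x h
    unfolding c_def p_def by simp
  hence "Q \<ge> margin j t x / \<rho> t"
    using R(2) unfolding margin_def c_def h_def h'_def p_def R_def by (simp add: field_simps)
  hence "A*X*Eg*G*Q \<ge> A*X*Eg*G*(margin j t x / \<rho> t)" using prefactor by (rule mult_left_mono)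
  thus ?thesis unfolding defect_eq X_def Eg_def G_def by (simp add: algebra_simps)
qed

lemma margin_last_pos: "margin k t x > 0"
  unfolding margin_def lag_def lag'_def L_rhs_coeff_def using lam_pos by simp

text \<open>The three parts of the shifted weight are paid for separately: \<open>x\<close> by
  \<open>3/2 - L_rhs_coeff k j \<ge> 1\<close>, the shift \<open>ln \<rho> / \<lambda>\<close> by \<open>lag' j t * \<rho> t = 2 \<beta> ln \<rho>\<close>
  (this fixes \<open>\<beta>\<close>), and \<open>lag (j+1) t\<close> by \<open>1/2 - L_rhs_coeff k j \<ge> 1\<close> when \<open>j + 1 < k\<close>.\<close>

lemma margin_ge_shifted_weight:
  assumes t: "t \<ge> 0" and x: "x \<ge> 0" and j: "1 \<le> j" "j < k"
  shows "margin j t x \<ge> x + ln (\<rho> t) / lam + lag (j+1) t"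
proof -
  define c where "c = L_rhs_coeff k j"
  define L where "L = ln (\<rho> t)"
  have L1: "L \<ge> 1" unfolding L_def using ln_rho_ge_1[OF t] .
  have c: "c \<le> 1/2" "c \<ge> - real k" "j + 1 < k \<Longrightarrow> c \<le> -1/2"
    using L_rhs_coeff_bounds[of j k] j k_ge unfolding c_def by auto
  have \<beta>: "\<beta> \<ge> 0" "\<beta> * (2*L) = (real k + 1) * L / lam"
    unfolding \<beta>_def using lam_pos by (simp_all add: field_simps)
  have margin: "margin j t x = \<beta> * (2*L) + c/lam + x*(3/2 - c) + \<beta> * L\<^sup>2 * (1/2 - c)"
    unfolding margin_def lag_def lag'_def c_def L_def using j rho_ge_16[OF t]
    by (simp add: algebra_simps)
  have "(real k + 1) * L / lam + c/lam - L/lam = (real k * L + c)/lam"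
    using lam_pos by (simp add: field_simps)
  moreover have "real k * L \<ge> real k" using mult_left_mono[OF L1, of "real k"] by simp
  ultimately have "(real k + 1) * L / lam + c/lam - L/lam \<ge> 0" using c lam_pos by simp
  moreover have "x * (3/2 - c) \<ge> x" using x c by (simp add: mult_left_mono[of 1 "3/2 - c" x, simplified])
  moreover have "\<beta> * L\<^sup>2 * (1/2 - c) \<ge> lag (j+1) t"
  proof (cases "j + 1 < k")
    case True
    hence "\<beta> * L\<^sup>2 * (1/2 - c) \<ge> \<beta> * L\<^sup>2 * 1" using \<beta> c by (intro mult_left_mono) auto
    thus ?thesis unfolding lag_def L_def using True by simp
  qed (use \<beta> c in \<open>simp add: lag_def\<close>)
  ultimately show ?thesis unfolding margin L_def[symmetric] using \<beta>(2) by linarith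
qed

lemma supsol_shifted_le:
  assumes t: "t \<ge> 0" and x: "x \<ge> 0" and A: "A \<ge> 0"
  shows "supsol A j t (x + ln (\<rho> t) / lam)
    \<le> A * amp t * exp (-lam*x) * exp (-x\<^sup>2/(4*width t)) * ((x + ln (\<rho> t) / lam + lag j t) / \<rho> t)"
proof -
  define y where "y = x + ln (\<rho> t) / lam"
  have y: "y \<ge> x" "y + lag j t \<ge> 0"
    unfolding y_def using ln_rho_ge_1[OF t] lam_pos x lag_nonneg[of j t] by auto
  have "exp (-lam*y) = exp (-lam*x) * exp (- ln (\<rho> t))"
    unfolding y_def using lam_pos by (simp add: algebra_simps exp_add[symmetric])
  also have "\<dots> = exp (-lam*x) / \<rho> t"
    using rho_ge_16[OF t] by (simp add: exp_minus divide_inverse)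
  finally have decay: "exp (-lam*y) = exp (-lam*x) / \<rho> t" .
  have "x\<^sup>2 \<le> y\<^sup>2" using x y by (intro power_mono) auto
  hence gauss: "exp (-y\<^sup>2/(4*width t)) \<le> exp (-x\<^sup>2/(4*width t))"
    using width_pos[OF t] by (simp add: divide_right_mono)
  have "supsol A j t y = A * amp t * (y + lag j t) * (exp (-lam*x) / \<rho> t) * exp (-y\<^sup>2/(4*width t))"
    unfolding supsol_def decay by simp
  also have "\<dots> \<le> A * amp t * (y + lag j t) * (exp (-lam*x) / \<rho> t) * exp (-x\<^sup>2/(4*width t))"
    using A amp_pos[of t] y rho_ge_16[OF t] gauss by (intro mult_left_mono) auto
  also have "\<dots> = A * amp t * exp (-lam*x) * exp (-x\<^sup>2/(4*width t)) * ((y + lag j t) / \<rho> t)"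
    using rho_ge_16[OF t] by (simp add: field_simps)
  finally show ?thesis by (simp add: y_def)
qed

lemma defect_ge_source:
  assumes t: "t \<ge> 0" and x: "x \<ge> 0" and j: "j \<in> {1..k}"
    and A: "A \<ge> 0" "A' \<ge> 0" "\<alpha> * A' \<le> A"
  shows "defect A j t x \<ge> (if j < k then \<alpha> * supsol A' (j+1) t (x + ln (\<rho> t) / lam) else 0)"
proof -
  define P where "P = amp t * exp (-lam*x) * exp (-x\<^sup>2/(4*width t))"
  have P: "P \<ge> 0" unfolding P_def using amp_pos[of t] by simp
  have \<rho>: "\<rho> t > 0" using rho_ge_16[OF t] by simp
  have defect: "defect A j t x \<ge> A * P * (margin j t x / \<rho> t)"
    using defect_ge_margin[OF t x j A(1)] unfolding P_def by (simp add: algebra_simps)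
  show ?thesis
  proof (cases "j < k")
    case False
    hence "j = k" using j by simp
    hence "A * P * (margin j t x / \<rho> t) \<ge> 0" using A P \<rho> margin_last_pos[of t x] by simp
    thus ?thesis using defect False by simp
  next
    case True
    define T where "T = x + ln (\<rho> t) / lam + lag (j+1) t"
    have T: "0 \<le> T" "T \<le> margin j t x"
      unfolding T_def using margin_ge_shifted_weight[OF t x _ True] j x ln_rho_ge_1[OF t] lam_pos
        lag_nonneg[of "j+1" t] by auto
    have "\<alpha> * supsol A' (j+1) t (x + ln (\<rho> t) / lam) \<le> \<alpha> * (A' * P * (T / \<rho> t))"
      using supsol_shifted_le[OF t x A(2), of "j+1"] \<alpha>_pos unfolding P_def T_def
      by (intro mult_left_mono) (auto simp: algebra_simps)
    also have "\<dots> = (\<alpha> * A') * T * (P / \<rho> t)" by (simp add: algebra_simps)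
    also have "\<dots> \<le> A * margin j t x * (P / \<rho> t)"
      using A T \<alpha>_pos P \<rho> by (intro mult_right_mono mult_mono) auto
    also have "\<dots> = A * P * (margin j t x / \<rho> t)" by (simp add: algebra_simps)
    finally show ?thesis using defect True by simp
  qed
qed

lemma is_sol_L_component:
  assumes "is_sol_L a k \<alpha> t0 V0 V" "j \<in> {1..k}"
  obtains Vt Vx Vxx where
    "continuous_on ({0..} \<times> {0..}) (\<lambda>(t,x). V j t x)"
    "\<And>T. T > 0 \<Longrightarrow> \<exists>B. \<forall>t\<in>{0..T}. \<forall>x\<ge>0. \<bar>V j t x\<bar> \<le> B"
    "\<And>t. t \<ge> 0 \<Longrightarrow> V j t 0 = 0"
    "\<And>x. x \<ge> 0 \<Longrightarrow> V j 0 x = V0 j x"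
    "\<And>t x. t > 0 \<Longrightarrow> x > 0 \<Longrightarrow> ((\<lambda>s. V j s x) has_real_derivative Vt t x) (at t)"
    "\<And>t x. t > 0 \<Longrightarrow> x > 0 \<Longrightarrow> ((\<lambda>y. V j t y) has_real_derivative Vx t x) (at x)"
    "\<And>t x. t > 0 \<Longrightarrow> x > 0 \<Longrightarrow> ((\<lambda>y. Vx t y) has_real_derivative Vxx t x) (at x)"
    "\<And>t x. t > 0 \<Longrightarrow> x > 0 \<Longrightarrow> Vt t x = Vxx t x + drift j t * Vx t x + a * V j t x
        + (if j < k then \<alpha> * V (j+1) t (x + ln (\<rho> t) / lam) else 0)"
proof -
  note S = assms(1)[unfolded is_sol_L_def, rule_format, OF assms(2)]
  note cont = S[THEN conjunct1] and bdd = S[THEN conjunct2, THEN conjunct1]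
    and bdry = S[THEN conjunct2, THEN conjunct2, THEN conjunct1]
    and init = S[THEN conjunct2, THEN conjunct2, THEN conjunct2, THEN conjunct1]
  from S obtain Vt Vx Vxx where D: "\<And>t x. t > 0 \<Longrightarrow> x > 0 \<Longrightarrow>
       ((\<lambda>s. V j s x) has_real_derivative Vt t x) (at t)
     \<and> ((\<lambda>y. V j t y) has_real_derivative Vx t x) (at x)
     \<and> ((\<lambda>y. Vx t y) has_real_derivative Vxx t x) (at x)
     \<and> Vt t x - 2 * sqrt a * Vx t x + L_rhs_coeff k j / (sqrt a * (t + t0)) * Vx t x
        = Vxx t x + a * V j t x + (if j < k then \<alpha> * V (j+1) t (x + ln (t + t0) / sqrt a) else 0)"
    by blast
  show thesis
  proof (rule that[of Vt Vx Vxx])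
    show "Vt t x = Vxx t x + drift j t * Vx t x + a * V j t x
        + (if j < k then \<alpha> * V (j+1) t (x + ln (\<rho> t) / lam) else 0)" if "t > 0" "x > 0" for t x
      using D[OF that] unfolding drift_def lam_def \<rho>_def by (simp add: algebra_simps)
  qed (use cont bdd bdry init D in auto)
qed

lemma signed_source_le_defect:
  assumes t: "t \<ge> 0" and x: "x \<ge> 0" and j: "j \<in> {1..k}"
    and A: "A \<ge> 0" "A' \<ge> 0" "\<alpha> * A' \<le> A"
    and succ: "j < k \<Longrightarrow> \<forall>t\<ge>0. \<forall>x\<ge>0. \<bar>V (j+1) t x\<bar> \<le> supsol A' (j+1) t x"
    and e: "\<bar>e\<bar> = 1"
  shows "e * (if j < k then \<alpha> * V (j+1) t (x + ln (\<rho> t) / lam) else 0) \<le> defect A j t x"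
proof -
  have "e * (if j < k then \<alpha> * V (j+1) t (x + ln (\<rho> t) / lam) else 0)
      \<le> (if j < k then \<alpha> * supsol A' (j+1) t (x + ln (\<rho> t) / lam) else 0)"
  proof (cases "j < k")
    case True
    define y where "y = x + ln (\<rho> t) / lam"
    have "y \<ge> 0" unfolding y_def using x ln_rho_ge_1[OF t] lam_pos by simp
    hence "\<bar>V (j+1) t y\<bar> \<le> supsol A' (j+1) t y" using succ[OF True] t by simp
    moreover have "e * V (j+1) t y \<le> \<bar>V (j+1) t y\<bar>" using e by (metis abs_ge_self abs_mult mult_1)
    ultimately have "\<alpha> * (e * V (j+1) t y) \<le> \<alpha> * supsol A' (j+1) t y"
      using \<alpha>_pos by (intro mult_left_mono) auto
    thus ?thesis using True unfolding y_def by (simp add: mult.left_commute)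
  qed simp
  also have "\<dots> \<le> defect A j t x" using defect_ge_source[OF t x j A] .
  finally show ?thesis .
qed

lemma comparison_signed:
  assumes sol: "is_sol_L a k \<alpha> t0 V0 V" and j: "j \<in> {1..k}"
    and A: "A \<ge> 0" "A' \<ge> 0" "\<alpha> * A' \<le> A"
    and init: "\<And>x. x \<ge> 0 \<Longrightarrow> \<bar>V0 j x\<bar> \<le> supsol A j 0 x"
    and succ: "j < k \<Longrightarrow> \<forall>t\<ge>0. \<forall>x\<ge>0. \<bar>V (j+1) t x\<bar> \<le> supsol A' (j+1) t x"
    and e: "\<bar>e\<bar> = 1" and t1: "t1 \<ge> 0" and x1: "x1 \<ge> 0"
  shows "e * V j t1 x1 \<le> supsol A j t1 x1"
proof -
  obtain Vt Vx Vxx where cont: "continuous_on ({0..} \<times> {0..}) (\<lambda>(t,x). V j t x)"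
    and bdd: "\<And>T. T > 0 \<Longrightarrow> \<exists>B. \<forall>t\<in>{0..T}. \<forall>x\<ge>0. \<bar>V j t x\<bar> \<le> B"
    and bdry: "\<And>t. t \<ge> 0 \<Longrightarrow> V j t 0 = 0"
    and V0: "\<And>x. x \<ge> 0 \<Longrightarrow> V j 0 x = V0 j x"
    and dt: "\<And>t x. t > 0 \<Longrightarrow> x > 0 \<Longrightarrow> ((\<lambda>s. V j s x) has_real_derivative Vt t x) (at t)"
    and dx: "\<And>t x. t > 0 \<Longrightarrow> x > 0 \<Longrightarrow> ((\<lambda>y. V j t y) has_real_derivative Vx t x) (at x)"
    and dxx: "\<And>t x. t > 0 \<Longrightarrow> x > 0 \<Longrightarrow> ((\<lambda>y. Vx t y) has_real_derivative Vxx t x) (at x)"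
    and eq: "\<And>t x. t > 0 \<Longrightarrow> x > 0 \<Longrightarrow> Vt t x = Vxx t x + drift j t * Vx t x + a * V j t x
        + (if j < k then \<alpha> * V (j+1) t (x + ln (\<rho> t) / lam) else 0)"
    using is_sol_L_component[OF sol j] by blast
  have le_abs: "e * v \<le> \<bar>v\<bar>" for v using e by (metis abs_ge_self abs_mult mult_1)
  have "e * V j t1 x1 - supsol A j t1 x1 \<le> 0"
  proof (rule weak_max_principle_quadrant[where u="\<lambda>t x. e * V j t x - supsol A j t x"
        and ut="\<lambda>t x. e * Vt t x - supsol_t A j t x" and ux="\<lambda>t x. e * Vx t x - supsol_x A j t x"
        and uxx="\<lambda>t x. e * Vxx t x - supsol_xx A j t x" and b="\<lambda>t x. drift j t" and c=a
        and Bb="2 * lam + real k / (lam * t0)"])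
    have "continuous_on ({0..} \<times> {0..}) (\<lambda>p. e * V j (fst p) (snd p) - supsol A j (fst p) (snd p))"
      using cont supsol_continuous[of A j] by (intro continuous_intros) (simp_all add: case_prod_beta')
    thus "continuous_on ({0..} \<times> {0..}) (\<lambda>(t,x). e * V j t x - supsol A j t x)"
      by (simp add: case_prod_beta')
    show "\<exists>B. \<forall>t\<in>{0..T}. \<forall>x\<ge>0. e * V j t x - supsol A j t x \<le> B" if T: "T > 0" for T
    proof -
      obtain B where B: "\<forall>t\<in>{0..T}. \<forall>x\<ge>0. \<bar>V j t x\<bar> \<le> B" using bdd[OF T] by blast
      have "e * V j t x - supsol A j t x \<le> B" if "t \<in> {0..T}" "x \<ge> 0" for t x
        using B that le_abs[of "V j t x"] supsol_nonneg[of t x A j] A by fastforce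
      thus ?thesis by blast
    qed
    show "e * V j 0 x - supsol A j 0 x \<le> 0" if "x \<ge> 0" for x
      using V0[OF that] init[OF that] le_abs[of "V0 j x"] by simp
    show "e * V j t 0 - supsol A j t 0 \<le> 0" if "t \<ge> 0" for t
      using bdry that supsol_nonneg[of t 0 A j] A by simp
    show "((\<lambda>s. e * V j s x - supsol A j s x) has_real_derivative e * Vt t x - supsol_t A j t x) (at t)"
      if "t > 0" "x > 0" for t x
      using dt[OF that] supsol_has_derivative_t[of t A j x] that by (auto intro!: derivative_eq_intros)
    show "((\<lambda>y. e * V j t y - supsol A j t y) has_real_derivative e * Vx t x - supsol_x A j t x) (at x)"
      if "t > 0" "x > 0" for t x
      using dx[OF that] supsol_has_derivative_x[of t A j x] that by (auto intro!: derivative_eq_intros)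
    show "((\<lambda>y. e * Vx t y - supsol_x A j t y) has_real_derivative e * Vxx t x - supsol_xx A j t x) (at x)"
      if "t > 0" "x > 0" for t x
      using dxx[OF that] supsol_x_has_derivative_x[of t A j x] that by (auto intro!: derivative_eq_intros)
    show "\<bar>drift j t\<bar> \<le> 2 * lam + real k / (lam * t0)" if "t \<ge> 0" for t
      using drift_bounded[OF that j] .
    show "e * Vt t x - supsol_t A j t x
        \<le> (e * Vxx t x - supsol_xx A j t x) + drift j t * (e * Vx t x - supsol_x A j t x)
          + a * (e * V j t x - supsol A j t x)" if "t > 0" "x > 0" for t x
      using signed_source_le_defect[where V = V and t = t and x = x, OF _ _ j A succ e] eq[OF that] that
      unfolding defect_def by (simp add: algebra_simps)
  qed (use t1 x1 in auto)
  thus ?thesis by simp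
qed

lemma comparison_abs:
  assumes "is_sol_L a k \<alpha> t0 V0 V" "j \<in> {1..k}" "A \<ge> 0" "A' \<ge> 0" "\<alpha> * A' \<le> A"
    and "\<And>x. x \<ge> 0 \<Longrightarrow> \<bar>V0 j x\<bar> \<le> supsol A j 0 x"
    and "j < k \<Longrightarrow> \<forall>t\<ge>0. \<forall>x\<ge>0. \<bar>V (j+1) t x\<bar> \<le> supsol A' (j+1) t x"
  shows "\<forall>t\<ge>0. \<forall>x\<ge>0. \<bar>V j t x\<bar> \<le> supsol A j t x"
proof (intro allI impI)
  fix t x :: real
  assume "t \<ge> 0" "x \<ge> 0"
  from comparison_signed[OF assms _ this, of 1] comparison_signed[OF assms _ this, of "-1"]
  show "\<bar>V j t x\<bar> \<le> supsol A j t x" by simp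
qed

lemma comparison_bounds:
  assumes sol: "is_sol_L a k \<alpha> t0 V0 V"
    and Am: "\<And>j. Am j \<ge> 0" "\<And>j. j < k \<Longrightarrow> \<alpha> * Am (j+1) \<le> Am j"
    and init: "\<And>j x. j \<in> {1..k} \<Longrightarrow> x \<ge> 0 \<Longrightarrow> \<bar>V0 j x\<bar> \<le> supsol (Am j) j 0 x"
    and j: "j \<in> {1..k}"
  shows "\<forall>t\<ge>0. \<forall>x\<ge>0. \<bar>V j t x\<bar> \<le> supsol (Am j) j t x"
proof -
  have "j \<le> k" "1 \<le> j" using j by auto
  then show ?thesis
  proof (induction j rule: inc_induct)
    case base
    show ?case by (rule comparison_abs[OF sol _ Am(1) order.refl]) (use k_ge \<alpha>_pos Am init in auto)
  next
    case (step n)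
    show ?case by (rule comparison_abs[OF sol _ Am(1) Am(1) Am(2)]) (use step init in auto)
  qed
qed

lemma compact_support_le_supsol:
  assumes cont: "continuous_on {0..} v"
    and supp: "\<exists>p q. 0 < p \<and> p \<le> q \<and> (\<forall>x. x \<notin> {p..q} \<longrightarrow> v x = 0)"
  shows "\<exists>A\<ge>0. \<forall>x\<ge>0. \<bar>v x\<bar> \<le> supsol A j 0 x"
proof -
  obtain p q where pq: "0 < p" "p \<le> q" and zero: "\<And>x. x \<notin> {p..q} \<Longrightarrow> v x = 0" using supp by blast
  have "compact (v ` {p..q})"
    using pq by (intro compact_continuous_image continuous_on_subset[OF cont]) auto
  then obtain M where M: "\<And>x. x \<in> {p..q} \<Longrightarrow> \<bar>v x\<bar> \<le> M"
    using compact_imp_bounded bounded_iff by (metis image_eqI real_norm_def)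
  have M0: "M \<ge> 0" using M[of p] pq by simp
  define m where "m = amp 0 * p * exp (-lam*q) * exp (-q\<^sup>2/(4*width 0))"
  have m: "m > 0" unfolding m_def using amp_pos[of 0] pq by simp
  have "\<bar>v x\<bar> \<le> supsol (M/m) j 0 x" if x: "x \<ge> 0" for x
  proof (cases "x \<in> {p..q}")
    case False
    thus ?thesis using zero[OF False] supsol_nonneg[of 0 x "M/m" j] x M0 m by simp
  next
    case True
    have "amp 0 * p \<le> amp 0 * (x + lag j 0)"
      using True lag_nonneg[of j 0] amp_pos[of 0] by (intro mult_left_mono) auto
    moreover have "exp (-lam*q) \<le> exp (-lam*x)" using True lam_pos by simp
    moreover have "x\<^sup>2 \<le> q\<^sup>2" using True pq by (intro power_mono) auto
    hence "exp (-q\<^sup>2/(4*width 0)) \<le> exp (-x\<^sup>2/(4*width 0))"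
      using width_pos[of 0] by (simp add: divide_right_mono)
    ultimately have "m \<le> amp 0 * (x + lag j 0) * exp (-lam*x) * exp (-x\<^sup>2/(4*width 0))"
      unfolding m_def using amp_pos[of 0] pq by (intro mult_mono) (auto intro: mult_nonneg_nonneg)
    hence "M/m * m \<le> M/m * (amp 0 * (x + lag j 0) * exp (-lam*x) * exp (-x\<^sup>2/(4*width 0)))"
      using M0 m by (intro mult_left_mono) auto
    thus ?thesis using M[OF True] m unfolding supsol_def by (simp add: mult.assoc)
  qed
  thus ?thesis using M0 m by (intro exI[of _ "M/m"]) auto
qed

lemma exists_amplitudes:
  assumes "\<And>j. j \<in> {1..k} \<Longrightarrow> \<exists>A\<ge>0. \<forall>x\<ge>0. \<bar>V0 j x\<bar> \<le> supsol A j 0 x"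
  obtains Am where "\<And>j. Am j \<ge> 0" "\<And>j. j < k \<Longrightarrow> \<alpha> * Am (j+1) \<le> Am j"
    "\<And>j x. j \<in> {1..k} \<Longrightarrow> x \<ge> 0 \<Longrightarrow> \<bar>V0 j x\<bar> \<le> supsol (Am j) j 0 x"
proof -
  obtain A where A: "\<And>j. j \<in> {1..k} \<Longrightarrow> A j \<ge> 0 \<and> (\<forall>x\<ge>0. \<bar>V0 j x\<bar> \<le> supsol (A j) j 0 x)"
    using assms by metis
  define S where "S = (\<Sum>j\<in>{1..k}. A j)"
  have S: "S \<ge> 0" "\<And>j. j \<in> {1..k} \<Longrightarrow> A j \<le> S"
    unfolding S_def using A by (auto intro: sum_nonneg member_le_sum)
  show thesis
  proof (rule that[of "\<lambda>j. S * (\<alpha> + 1)^(k - j)"])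
    show "S * (\<alpha> + 1)^(k - j) \<ge> 0" for j using S \<alpha>_pos by simp
    show "\<alpha> * (S * (\<alpha> + 1)^(k - (j+1))) \<le> S * (\<alpha> + 1)^(k - j)" if "j < k" for j
    proof -
      have "(\<alpha> + 1)^(k - j) = (\<alpha> + 1) * (\<alpha> + 1)^(k - (j+1))"
        using that by (simp flip: power_Suc add: Suc_diff_Suc)
      thus ?thesis using S \<alpha>_pos by (simp add: algebra_simps)
    qed
    show "\<bar>V0 j x\<bar> \<le> supsol (S * (\<alpha> + 1)^(k - j)) j 0 x" if "j \<in> {1..k}" "x \<ge> 0" for j x
    proof -
      have "A j \<le> S * (\<alpha> + 1)^(k - j)"
        using S(2)[OF that(1)] mult_left_mono[of 1 "(\<alpha> + 1)^(k - j)" S] S(1) \<alpha>_pos by simp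
      hence "supsol (A j) j 0 x \<le> supsol (S * (\<alpha> + 1)^(k - j)) j 0 x"
        using that(2) by (intro supsol_mono) auto
      thus ?thesis using A[OF that(1)] that(2) by fastforce
    qed
  qed
qed

section \<open>The \<open>L\<^sup>2\<close> bound in the rescaled variables\<close>

lemma rescaled_supsol_sq_le:
  assumes \<tau>: "\<tau> \<ge> 0" and \<eta>: "\<eta> \<ge> 0" and A: "A \<ge> 0"
  defines "s \<equiv> t0 * exp \<tau>"
  defines "x \<equiv> \<eta> * sqrt s"
  shows "(exp (lam * x) * exp (-\<tau>/2) * exp (\<eta>\<^sup>2/8) * supsol A j (s - t0) x)\<^sup>2
    \<le> t0 * A\<^sup>2 * exp 3 * (16 + 512*\<beta>\<^sup>2) * exp (-\<eta>/2)"
proof -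
  define t where "t = s - t0"
  define r where "r = sqrt s"
  have s: "s \<ge> 16" unfolding s_def using t0_ge \<tau> mult_mono[of 16 t0 1 "exp \<tau>"] by simp
  have "s \<ge> t0" unfolding s_def using t0_ge \<tau> mult_left_mono[of 1 "exp \<tau>" t0] by simp
  hence t: "t \<ge> 0" and \<rho>: "\<rho> t = s" unfolding t_def \<rho>_def by auto
  have r: "r \<ge> 4" "r * r = s" unfolding r_def using s real_sqrt_le_mono[of 16 s] by auto
  have x: "x \<ge> 0" "x\<^sup>2 = \<eta>\<^sup>2 * s" unfolding x_def using \<eta> s by (auto simp: power_mult_distrib)
  define \<sigma> where "\<sigma> = width t"
  have \<sigma>: "\<sigma> = s + 2*r" "\<sigma> > 0" unfolding \<sigma>_def width_def \<rho> r_def using s by (simp_all add: add_pos_nonneg)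
  define g where "g = amp t"
  have g: "0 < g" "g \<le> 1" unfolding g_def using amp_pos amp_le_1[OF t] by auto
  define h where "h = lag j t"
  have h: "h \<ge> 0" unfolding h_def using lag_nonneg .
  define E where "E = -\<tau>/2 + \<eta>\<^sup>2/8 - x\<^sup>2/(4*\<sigma>)"
  have "exp E = exp (-\<tau>/2) * exp (\<eta>\<^sup>2/8) * exp (- x\<^sup>2/(4*\<sigma>))"
    unfolding E_def by (simp add: exp_add[symmetric])
  moreover have "exp (lam * x) * exp (- lam * x) = 1" by (simp add: exp_add[symmetric])
  moreover have "exp (lam * x) * exp (-\<tau>/2) * exp (\<eta>\<^sup>2/8) * supsol A j (s - t0) x
    = (exp (lam * x) * exp (- lam * x)) * (exp (-\<tau>/2) * exp (\<eta>\<^sup>2/8) * exp (- x\<^sup>2/(4*\<sigma>))) * (A*g*(x+h))"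
    unfolding supsol_def t_def[symmetric] g_def[symmetric] h_def[symmetric] \<sigma>_def[symmetric]
    by (simp add: algebra_simps)
  ultimately have "exp (lam * x) * exp (-\<tau>/2) * exp (\<eta>\<^sup>2/8) * supsol A j (s - t0) x = exp E * (A*g*(x+h))"
    by simp
  hence "(exp (lam * x) * exp (-\<tau>/2) * exp (\<eta>\<^sup>2/8) * supsol A j (s - t0) x)\<^sup>2 = exp (2*E) * (A*g*(x+h))\<^sup>2"
    by (simp add: power_mult_distrib exp_double)
  also have "\<dots> \<le> ((t0/s) * exp (-\<eta>\<^sup>2/12)) * (A\<^sup>2 * (s * (2*\<eta>\<^sup>2 + 512*\<beta>\<^sup>2)))"
  proof (rule mult_mono)
    have "2*\<sigma> \<le> 3 * s" using \<sigma> r mult_right_mono[of 4 r r] by linarith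
    hence "x\<^sup>2/(2*\<sigma>) \<ge> x\<^sup>2/(3 * s)" using \<sigma> s by (intro divide_left_mono) auto
    moreover have "x\<^sup>2/(3 * s) = \<eta>\<^sup>2/3" using x s by simp
    moreover have "2*E = -\<tau> + \<eta>\<^sup>2/4 - x\<^sup>2/(2*\<sigma>)" unfolding E_def using \<sigma>(2) by (simp add: field_simps)
    ultimately have "2*E \<le> -\<tau> + (-\<eta>\<^sup>2/12)" by linarith
    hence "exp (2*E) \<le> exp (-\<tau>) * exp (-\<eta>\<^sup>2/12)" by (simp add: exp_add[symmetric])
    moreover have "exp (-\<tau>) = t0/s" unfolding s_def using t0_ge by (simp add: exp_minus field_simps)
    ultimately show "exp (2*E) \<le> (t0/s) * exp (-\<eta>\<^sup>2/12)" by simp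
    have "h\<^sup>2 \<le> 256 * \<beta>\<^sup>2 * s" using lag_sq_le[OF t] unfolding h_def \<rho> .
    moreover have "(x+h)\<^sup>2 \<le> 2*x\<^sup>2 + 2*h\<^sup>2" using sum_squares_ge_zero[of "x-h" 0]
      by (simp add: power2_eq_square algebra_simps)
    ultimately have "(x+h)\<^sup>2 \<le> s * (2*\<eta>\<^sup>2 + 512*\<beta>\<^sup>2)" using x by (simp add: algebra_simps)
    moreover have "(A*g)\<^sup>2 \<le> A\<^sup>2" using A g by (intro power_mono) (auto simp: mult_left_le)
    ultimately show "(A*g*(x+h))\<^sup>2 \<le> A\<^sup>2 * (s * (2*\<eta>\<^sup>2 + 512*\<beta>\<^sup>2))"
      unfolding power_mult_distrib[of "A*g"] by (intro mult_mono) auto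
  qed (use t0_ge s in auto)
  also have "\<dots> = t0 * A\<^sup>2 * ((2*\<eta>\<^sup>2 + 512*\<beta>\<^sup>2) * exp (-\<eta>\<^sup>2/12))" using s by (simp add: field_simps)
  also have "\<dots> \<le> t0 * A\<^sup>2 * (exp 3 * (16 + 512*\<beta>\<^sup>2) * exp (-\<eta>/2))"
    using quadratic_gaussian_le_exp_half[of \<eta> "512*\<beta>\<^sup>2"] \<eta> t0_ge by (intro mult_left_mono) auto
  finally show ?thesis by (simp add: mult.assoc)
qed

lemma w_of_sq_le:
  assumes bound: "\<And>t x. t \<ge> 0 \<Longrightarrow> x \<ge> 0 \<Longrightarrow> \<bar>V j t x\<bar> \<le> supsol A j t x"
    and \<tau>: "\<tau> \<ge> 0" and \<eta>: "\<eta> \<ge> 0" and A: "A \<ge> 0"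
  shows "(w_of a t0 V j \<tau> \<eta>)\<^sup>2 \<le> t0 * A\<^sup>2 * exp 3 * (16 + 512*\<beta>\<^sup>2) * exp (-\<eta>/2)"
proof -
  define s where "s = t0 * exp \<tau>"
  define x where "x = \<eta> * sqrt s"
  have s: "s - t0 \<ge> 0" unfolding s_def using t0_ge \<tau> mult_left_mono[of 1 "exp \<tau>" t0] by simp
  have x: "x \<ge> 0" unfolding x_def using \<eta> s t0_ge by simp
  have "\<bar>w_of a t0 V j \<tau> \<eta>\<bar> = exp (lam * x) * exp (-\<tau>/2) * exp (\<eta>\<^sup>2/8) * \<bar>V j (s - t0) x\<bar>"
    unfolding w_of_def Let_def lam_def x_def s_def by (simp add: abs_mult)
  also have "\<dots> \<le> exp (lam * x) * exp (-\<tau>/2) * exp (\<eta>\<^sup>2/8) * supsol A j (s - t0) x"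
    using bound[OF s x] by (intro mult_left_mono) auto
  finally have "(w_of a t0 V j \<tau> \<eta>)\<^sup>2 \<le> (exp (lam * x) * exp (-\<tau>/2) * exp (\<eta>\<^sup>2/8) * supsol A j (s - t0) x)\<^sup>2"
    using abs_le_square_iff by fastforce
  also have "\<dots> \<le> t0 * A\<^sup>2 * exp 3 * (16 + 512*\<beta>\<^sup>2) * exp (-\<eta>/2)"
    unfolding x_def s_def by (rule rescaled_supsol_sq_le[OF \<tau> \<eta> A])
  finally show ?thesis .
qed

lemma w_of_continuous_on:
  assumes cont: "continuous_on ({0..} \<times> {0..}) (\<lambda>(t,x). V j t x)" and \<tau>: "\<tau> \<ge> 0"
  shows "continuous_on {0<..} (\<lambda>\<eta>. w_of a t0 V j \<tau> \<eta>)"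
proof -
  define t where "t = t0 * exp \<tau> - t0"
  have t: "t \<ge> 0" unfolding t_def using t0_ge \<tau> mult_left_mono[of 1 "exp \<tau>" t0] by simp
  have "continuous_on {0<..} (\<lambda>\<eta>. V j t (\<eta> * sqrt (t0 * exp \<tau>)))"
    by (rule continuous_on_compose2[OF cont, where f="\<lambda>\<eta>. (t, \<eta> * sqrt (t0 * exp \<tau>))", simplified])
      (use t t0_ge in \<open>auto intro!: continuous_intros\<close>)
  thus ?thesis unfolding w_of_def Let_def t_def by (intro continuous_intros) auto
qed

lemma w_of_L2_bounded:
  assumes bound: "\<And>j t x. j \<in> {1..k} \<Longrightarrow> t \<ge> 0 \<Longrightarrow> x \<ge> 0 \<Longrightarrow> \<bar>V j t x\<bar> \<le> supsol (Am j) j t x"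
    and Am: "\<And>j. Am j \<ge> 0"
    and cont: "\<And>j. j \<in> {1..k} \<Longrightarrow> continuous_on ({0..} \<times> {0..}) (\<lambda>(t,x). V j t x)"
  shows "\<exists>C>0. \<forall>\<tau>\<ge>0. \<forall>i\<in>{1..k}. (\<lambda>\<eta>. (w_of a t0 V i \<tau> \<eta>)\<^sup>2) integrable_on {0<..}
            \<and> sqrt (integral {0<..} (\<lambda>\<eta>. (w_of a t0 V i \<tau> \<eta>)\<^sup>2)) \<le> C"
proof -
  define Amax where "Amax = (\<Sum>j\<in>{1..k}. Am j)"
  define F where "F \<eta> = t0 * Amax\<^sup>2 * exp 3 * (16 + 512*\<beta>\<^sup>2) * exp (-\<eta>/2)" for \<eta> :: real
  have F: "F integrable_on {0<..}" unfolding F_def[abs_def] by (rule exp_neg_half_integrable_Ioi)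
  define C where "C = sqrt (integral {0<..} F) + 1"
  have "(\<lambda>\<eta>. (w_of a t0 V i \<tau> \<eta>)\<^sup>2) integrable_on {0<..}
      \<and> sqrt (integral {0<..} (\<lambda>\<eta>. (w_of a t0 V i \<tau> \<eta>)\<^sup>2)) \<le> C" if \<tau>: "\<tau> \<ge> 0" and i: "i \<in> {1..k}" for \<tau> i
  proof -
    define f where "f \<eta> = (w_of a t0 V i \<tau> \<eta>)\<^sup>2" for \<eta>
    have "Am i \<le> Amax" unfolding Amax_def using Am i by (intro member_le_sum) auto
    hence "(Am i)\<^sup>2 \<le> Amax\<^sup>2" using Am by (intro power_mono) auto
    hence "t0 * (Am i)\<^sup>2 * exp 3 * (16 + 512*\<beta>\<^sup>2) * exp (-\<eta>/2) \<le> F \<eta>" for \<eta>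
      unfolding F_def using t0_ge by (intro mult_right_mono mult_left_mono) auto
    moreover have "f \<eta> \<le> t0 * (Am i)\<^sup>2 * exp 3 * (16 + 512*\<beta>\<^sup>2) * exp (-\<eta>/2)" if "\<eta> \<in> {0<..}" for \<eta>
      unfolding f_def by (rule w_of_sq_le) (use bound[OF i] \<tau> Am that in auto)
    ultimately have fF: "f \<eta> \<le> F \<eta>" if "\<eta> \<in> {0<..}" for \<eta>
      using that order.trans by blast
    have "continuous_on {0<..} f"
      unfolding f_def using w_of_continuous_on[where V = V and j = i, OF cont[OF i] \<tau>] by (intro continuous_intros)
    hence "f \<in> borel_measurable (lebesgue_on {0<..})"
      by (rule continuous_imp_measurable_on_sets_lebesgue) simp
    hence f: "f integrable_on {0<..}"
      by (rule measurable_bounded_by_integrable_imp_integrable_real[OF _ F]) (use fF in \<open>auto simp: f_def\<close>)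
    have "sqrt (integral {0<..} f) \<le> sqrt (integral {0<..} F)"
      by (rule real_sqrt_le_mono[OF integral_le[OF f F fF]])
    hence "sqrt (integral {0<..} f) \<le> C" unfolding C_def by linarith
    thus ?thesis using f unfolding f_def by simp
  qed
  moreover have "integral {0<..} F \<ge> 0"
    by (rule integral_nonneg[OF F]) (use t0_ge in \<open>simp add: F_def\<close>)
  hence "C > 0" unfolding C_def by (simp add: add_nonneg_pos)
  ultimately show ?thesis by blast
qed

end

theorem lemma4p2:
  fixes f f1 f2 :: "real \<Rightarrow> real" and k :: nat and \<alpha> :: real
    and V0 :: "nat \<Rightarrow> real \<Rightarrow> real"
  assumes f_C2: "\<And>s. s \<in> {0..1} \<Longrightarrow> (f has_real_derivative f1 s) (at s within {0..1})"
        "\<And>s. s \<in> {0..1} \<Longrightarrow> (f1 has_real_derivative f2 s) (at s within {0..1})"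
        "continuous_on {0..1} f2"
    and f_bd: "f 0 = 0" "f 1 = 0" "f1 0 > 0" "f1 1 < 0"
    and f_KPP: "\<And>s. s \<in> {0<..<1} \<Longrightarrow> 0 < f s \<and> f s \<le> f1 0 * s"
    and k: "k \<ge> 2" and \<alpha>: "\<alpha> > 0"
    and V0_nonneg: "\<And>i x. i \<in> {1..k} \<Longrightarrow> V0 i x \<ge> 0"
    and V0_cont: "\<And>i. i \<in> {1..k} \<Longrightarrow> continuous_on {0..} (V0 i)"
    and V0_supp: "\<And>i. i \<in> {1..k} \<Longrightarrow>
                    \<exists>a b. 0 < a \<and> a \<le> b \<and> (\<forall>x. x \<notin> {a..b} \<longrightarrow> V0 i x = 0)"
    and V0_nontriv: "\<And>i. i \<in> {1..k} \<Longrightarrow> \<exists>x>0. V0 i x \<noteq> 0"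
  shows "\<exists>T. \<forall>t0. t0 > 0 \<and> t0 \<ge> T \<longrightarrow>
           (\<forall>V. is_sol_L (f1 0) k \<alpha> t0 V0 V \<longrightarrow>
              (\<exists>C>0. \<forall>\<tau>\<ge>0. \<forall>i\<in>{1..k}.
                  (\<lambda>\<eta>. (w_of (f1 0) t0 V i \<tau> \<eta>)\<^sup>2) integrable_on {0<..}
                \<and> sqrt (integral {0<..} (\<lambda>\<eta>. (w_of (f1 0) t0 V i \<tau> \<eta>)\<^sup>2)) \<le> C))"
proof (rule exI[of _ 16], intro allI impI)
  fix t0 :: real and V :: "nat \<Rightarrow> real \<Rightarrow> real \<Rightarrow> real"
  assume t0: "0 < t0 \<and> 16 \<le> t0" and sol: "is_sol_L (f1 0) k \<alpha> t0 V0 V"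
  interpret L_system "f1 0" t0 \<alpha> k
    by unfold_locales (use f_bd t0 \<alpha> k in auto)
  obtain Am where Am: "\<And>j. Am j \<ge> 0" "\<And>j. j < k \<Longrightarrow> \<alpha> * Am (j+1) \<le> Am j"
    and init: "\<And>j x. j \<in> {1..k} \<Longrightarrow> x \<ge> 0 \<Longrightarrow> \<bar>V0 j x\<bar> \<le> supsol (Am j) j 0 x"
    using exists_amplitudes compact_support_le_supsol[OF V0_cont V0_supp] by metis
  have "\<And>j t x. j \<in> {1..k} \<Longrightarrow> t \<ge> 0 \<Longrightarrow> x \<ge> 0 \<Longrightarrow> \<bar>V j t x\<bar> \<le> supsol (Am j) j t x"
    using comparison_bounds[OF sol Am init] by blast
  moreover have "\<And>j. j \<in> {1..k} \<Longrightarrow> continuous_on ({0..} \<times> {0..}) (\<lambda>(t,x). V j t x)"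
    using sol unfolding is_sol_L_def by blast
  ultimately show "\<exists>C>0. \<forall>\<tau>\<ge>0. \<forall>i\<in>{1..k}.
      (\<lambda>\<eta>. (w_of (f1 0) t0 V i \<tau> \<eta>)\<^sup>2) integrable_on {0<..}
    \<and> sqrt (integral {0<..} (\<lambda>\<eta>. (w_of (f1 0) t0 V i \<tau> \<eta>)\<^sup>2)) \<le> C"
    by (rule w_of_L2_bounded[OF _ Am(1)])
qed

end
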